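(* Let $K$ be a finite subset of $\mathbb{R}^3$. Then $K^{cc}\subset K^{rc}$.
   Context: A horizontal segment/line is one contained in a plane $\{z=c\}$; a vertical segment/line is one parallel to the $z$ axis. A $2+1$-complex is a closed subset of $\mathbb{R}^3$ that is the union of a finite list $L$ of elements, each of one of the following kinds: points; relatively open horizontal segments whose two endpoints belong to $L$; relatively open vertical segments whose two endpoints belong to $L$; relatively open triangles in a horizontal plane whose three boundary segments belong to $L$; relatively open rectangles in a vertical plane, two of whose sides are parallel to the $z$ axis, whose four boundary segments belong to $L$; open subsets of $\mathbb{R}^3$ whose boundary is a union of elements of the previous kinds, all belonging to $L$. For $M\subset\mathbb{R}^3$, a point $p\in M$ is extremal if no relatively open horizontal or vertical segment contained in $M$ contains $p$; $Extr(M)$ is the set of extremal points. $K^{cc}=\bigcup\{L: L\text{ a } 2+1\text{-complex with } Extr(L)\subset K\}$. A function $f:\mathbb{R}^3\to\mathbb{R}$ is $2+1$-convex if its restriction to every horizontal and every vertical line is convex; $K^{rc}=\{x: f(x)\le\sup_K f\text{ for every } 2+1\text{-convex } f\}$. *)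

theory Defs
  imports "HOL-Analysis.Analysis"
begin

text \<open>Points of R^3 are vectors of type real^3; the z-coordinate is component 3.\<close>

definition e3 :: "real^3" where "e3 = axis 3 1"

definition hor_pair :: "real^3 \<Rightarrow> real^3 \<Rightarrow> bool" where
  "hor_pair a b \<longleftrightarrow> a \<noteq> b \<and> a$3 = b$3"

definition vert_pair :: "real^3 \<Rightarrow> real^3 \<Rightarrow> bool" where
  "vert_pair a b \<longleftrightarrow> a \<noteq> b \<and> a$1 = b$1 \<and> a$2 = b$2"

definition point_el :: "(real^3) set \<Rightarrow> bool" where
  "point_el E \<longleftrightarrow> (\<exists>p. E = {p})"

definition hseg_el :: "(real^3) set set \<Rightarrow> (real^3) set \<Rightarrow> bool" where
  "hseg_el L E \<longleftrightarrow> (\<exists>a b. hor_pair a b \<and> E = open_segment a b \<and> {a} \<in> L \<and> {b} \<in> L)"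

definition vseg_el :: "(real^3) set set \<Rightarrow> (real^3) set \<Rightarrow> bool" where
  "vseg_el L E \<longleftrightarrow> (\<exists>a b. vert_pair a b \<and> E = open_segment a b \<and> {a} \<in> L \<and> {b} \<in> L)"

definition htri_el :: "(real^3) set set \<Rightarrow> (real^3) set \<Rightarrow> bool" where
  "htri_el L E \<longleftrightarrow> (\<exists>a b c. a$3 = b$3 \<and> b$3 = c$3 \<and> \<not> collinear {a, b, c} \<and>
      E = rel_interior (convex hull {a, b, c}) \<and>
      open_segment a b \<in> L \<and> open_segment b c \<in> L \<and> open_segment a c \<in> L)"

definition vrect_el :: "(real^3) set set \<Rightarrow> (real^3) set \<Rightarrow> bool" where
  "vrect_el L E \<longleftrightarrow> (\<exists>p q h. hor_pair p q \<and> h > 0 \<and>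
      E = {p + s *\<^sub>R (q - p) + t *\<^sub>R (h *\<^sub>R e3) | s t. 0 < s \<and> s < 1 \<and> 0 < t \<and> t < 1} \<and>
      open_segment p q \<in> L \<and> open_segment (p + h *\<^sub>R e3) (q + h *\<^sub>R e3) \<in> L \<and>
      open_segment p (p + h *\<^sub>R e3) \<in> L \<and> open_segment q (q + h *\<^sub>R e3) \<in> L)"

definition lowdim_el :: "(real^3) set set \<Rightarrow> (real^3) set \<Rightarrow> bool" where
  "lowdim_el L E \<longleftrightarrow> point_el E \<or> hseg_el L E \<or> vseg_el L E \<or> htri_el L E \<or> vrect_el L E"

definition open_el :: "(real^3) set set \<Rightarrow> (real^3) set \<Rightarrow> bool" where
  "open_el L E \<longleftrightarrow> open E \<and> bounded E \<and>
      (\<exists>S. S \<subseteq> L \<and> (\<forall>F\<in>S. lowdim_el L F) \<and> frontier E = \<Union>S)"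

definition complex21 :: "(real^3) set \<Rightarrow> bool" where
  "complex21 C \<longleftrightarrow> closed C \<and>
     (\<exists>L. finite L \<and> (\<forall>E\<in>L. lowdim_el L E \<or> open_el L E) \<and> C = \<Union>L)"

definition Extr :: "(real^3) set \<Rightarrow> (real^3) set" where
  "Extr M = {p \<in> M. \<not> (\<exists>a b. (hor_pair a b \<or> vert_pair a b) \<and>
                          open_segment a b \<subseteq> M \<and> p \<in> open_segment a b)}"

definition Kcc :: "(real^3) set \<Rightarrow> (real^3) set" where
  "Kcc K = \<Union>{C. complex21 C \<and> Extr C \<subseteq> K}"

definition convex21 :: "(real^3 \<Rightarrow> real) \<Rightarrow> bool" where
  "convex21 f \<longleftrightarrow>
     (\<forall>x d. d \<noteq> 0 \<and> d$3 = 0 \<longrightarrow> convex_on UNIV (\<lambda>t::real. f (x + t *\<^sub>R d))) \<and>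
     (\<forall>x. convex_on UNIV (\<lambda>t::real. f (x + t *\<^sub>R e3)))"

definition Krc :: "(real^3) set \<Rightarrow> (real^3) set" where
  "Krc K = {x. \<forall>f. convex21 f \<longrightarrow> f x \<le> Sup (f ` K)}"

end

theory Submission
  imports Defs
begin

(* A 2+1-convex function is convex along the coordinate axes and bounded on cubes, hence
  locally Lipschitz and in particular continuous, so it attains its maximum on a compact
  2+1-complex C.  Choose a maximiser p farthest from the origin.  If p lay inside an open
  horizontal or vertical segment contained in C, convexity along that segment would make two
  symmetric points p - v, p + v maximisers as well, and by the parallelogram law one of them
  is farther from the origin.  So p is extremal, hence p is in K, and f x <= f p <= sup f(K). *)

definition convex_along :: "('a::real_vector \<Rightarrow> real) \<Rightarrow> 'a \<Rightarrow> bool" where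
  "convex_along f d \<longleftrightarrow> (\<forall>x. convex_on UNIV (\<lambda>t. f (x + t *\<^sub>R d)))"

lemma convex_on_UNIV_compose_scale:
  fixes \<phi> :: "real \<Rightarrow> real"
  assumes "convex_on UNIV \<phi>"
  shows "convex_on UNIV (\<lambda>t. \<phi> (c * t))"
proof (rule convex_onI)
  fix t x y :: real
  assume "0 < t" "t < 1"
  then show "\<phi> (c * ((1 - t) *\<^sub>R x + t *\<^sub>R y)) \<le> (1 - t) * \<phi> (c * x) + t * \<phi> (c * y)"
    using convex_onD[OF assms, of t "c * x" "c * y"] by (simp add: algebra_simps)
qed simp

lemma convex_along_scaleR:
  assumes "convex_along f d"
  shows "convex_along f (c *\<^sub>R d)"
  using convex_on_UNIV_compose_scale[of "\<lambda>t. f (x + t *\<^sub>R d)" c for x] assms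
  by (simp add: convex_along_def mult.commute)

lemma convex_along_midpoint:
  assumes "convex_along f v"
  shows "2 * f x \<le> f (x - v) + f (x + v)"
  using convex_onD[of UNIV "\<lambda>t. f (x + t *\<^sub>R v)" "1/2" "-1" 1] assms
  by (simp add: convex_along_def)

lemma convex_along_le_max:
  assumes "convex_along f d" "\<bar>t\<bar> \<le> R"
  shows "f (x + t *\<^sub>R d) \<le> max (f (x - R *\<^sub>R d)) (f (x + R *\<^sub>R d))"
proof -
  have "convex_on {-R..R} (\<lambda>t. f (x + t *\<^sub>R d))"
    using assms(1) by (auto simp: convex_along_def intro: convex_on_subset[where T = UNIV])
  from convex_on_le_max[OF this, of t] show ?thesis
    using assms(2) by (simp add: abs_le_iff)
qed

lemma convex_increment_le_nonneg:
  fixes \<phi> :: "real \<Rightarrow> real"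
  assumes "convex_on UNIV \<phi>" "\<And>s. \<bar>s\<bar> \<le> 1 \<Longrightarrow> \<bar>\<phi> s\<bar> \<le> B" "0 \<le> t" "t \<le> 1"
  shows "\<bar>\<phi> t - \<phi> 0\<bar> \<le> 2 * B * t"
proof -
  have "\<phi> t \<le> (1 - t) * \<phi> 0 + t * \<phi> 1"
    using convex_onD[OF assms(1), of t 0 1] assms(3,4) by simp
  moreover have "(1 + t) * \<phi> 0 \<le> t * \<phi> (-1) + \<phi> t"
  proof -
    define u where "u = 1 / (1 + t)"
    have "(1 - u) *\<^sub>R (-1) + u *\<^sub>R t = 0" "0 \<le> u" "u \<le> 1"
      using assms(3) by (auto simp: u_def field_simps)
    then have "\<phi> 0 \<le> (1 - u) * \<phi> (-1) + u * \<phi> t"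
      using convex_onD[OF assms(1), of u "-1" t] by simp
    moreover have "(1 + t) * u = 1" "1 - u = t * u"
      using assms(3) by (simp_all add: u_def field_simps)
    then have "(1 + t) * ((1 - u) * \<phi> (-1) + u * \<phi> t) = t * \<phi> (-1) + \<phi> t"
      by algebra
    ultimately show ?thesis
      using assms(3) mult_left_mono[of "\<phi> 0" _ "1 + t"] by fastforce
  qed
  moreover have tB: "t * y \<le> t * B" if "\<bar>y\<bar> \<le> B" for y
    using that assms(3) by (simp add: abs_le_iff mult_left_mono)
  ultimately show ?thesis
    using tB[of "\<phi> 1"] tB[of "\<phi> (-1)"] tB[of "- \<phi> 0"]
      assms(2)[of 1] assms(2)[of "-1"] assms(2)[of 0]
    by (simp add: abs_le_iff algebra_simps)
qed

lemma convex_bounded_increment_le: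
  fixes \<phi> :: "real \<Rightarrow> real"
  assumes "convex_on UNIV \<phi>" "\<And>s. \<bar>s\<bar> \<le> 1 \<Longrightarrow> \<bar>\<phi> s\<bar> \<le> B" "\<bar>t\<bar> \<le> 1"
  shows "\<bar>\<phi> t - \<phi> 0\<bar> \<le> 2 * B * \<bar>t\<bar>"
proof (cases "0 \<le> t")
  case True
  then show ?thesis
    using convex_increment_le_nonneg[OF assms(1,2)] assms(3) by simp
next
  case False
  have "convex_on UNIV (\<lambda>s. \<phi> (-1 * s))"
    by (rule convex_on_UNIV_compose_scale[OF assms(1)])
  from convex_increment_le_nonneg[OF this, of B "-t"] show ?thesis
    using assms(2,3) False by simp
qed

lemma axis_convex_bounded_above_on_cube:
  fixes f :: "real^'n \<Rightarrow> real"
  assumes "\<And>i. convex_along f (axis i 1)"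
  shows "\<exists>B. \<forall>h. (\<forall>i. \<bar>h$i\<bar> \<le> R) \<longrightarrow> f (p + h) \<le> B"
proof -
  define corner :: "('n \<Rightarrow> bool) \<Rightarrow> real^'n" where "corner b = (\<chi> i. if b i then R else -R)" for b
  define B where "B = Max (range (\<lambda>b. f (p + corner b)))"
  have "f (p + h) \<le> B" if "\<forall>i\<in>I. \<bar>h$i\<bar> \<le> R" "\<forall>i\<in>-I. h$i = R \<or> h$i = -R" for I h
    using finite[of I] that
  proof (induction I arbitrary: h rule: finite_induct)
    case empty
    obtain b where "h = corner b"
    proof
      show "h = corner (\<lambda>i. h$i = R)"
      proof (rule vec_eq_iff[THEN iffD2], rule allI)
        fix j
        have "h$j = R \<or> h$j = -R"
          using empty.prems(2) by blast
        then show "h$j = corner (\<lambda>i. h$i = R) $ j"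
          by (cases "h$j = R") (simp_all add: corner_def)
      qed
    qed
    then show ?case
      unfolding B_def by (auto intro: Max_ge)
  next
    case (insert i I)
    define h0 where "h0 = h - h$i *\<^sub>R axis i 1"
    have coord: "(h0 + c *\<^sub>R axis i 1)$j = (if j = i then c else h$j)" for c j
      by (simp add: h0_def axis_def)
    have "f (p + (h0 + c *\<^sub>R axis i 1)) \<le> B" if "c = R \<or> c = -R" for c
    proof (rule insert.IH)
      show "\<forall>j\<in>I. \<bar>(h0 + c *\<^sub>R axis i 1)$j\<bar> \<le> R"
        unfolding coord using insert.prems(1) insert.hyps(2) by auto
      show "\<forall>j\<in>-I. (h0 + c *\<^sub>R axis i 1)$j = R \<or> (h0 + c *\<^sub>R axis i 1)$j = -R"
        unfolding coord using that insert.prems(2) by auto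
    qed
    from this[of R] this[of "-R"]
    have "max (f (p + h0 - R *\<^sub>R axis i 1)) (f (p + h0 + R *\<^sub>R axis i 1)) \<le> B"
      by (simp add: add.assoc add_diff_eq)
    moreover have "f (p + h) \<le> max (f (p + h0 - R *\<^sub>R axis i 1)) (f (p + h0 + R *\<^sub>R axis i 1))"
      using convex_along_le_max[of f "axis i 1" "h$i" R "p + h0"] assms insert.prems
      by (simp add: h0_def)
    ultimately show ?case by linarith
  qed
  from this[of UNIV] show ?thesis by auto
qed

lemma axis_convex_increment_bound:
  fixes f :: "real^'n \<Rightarrow> real"
  assumes "\<And>i. convex_along f (axis i 1)"
    and "\<And>h. \<forall>i. \<bar>h$i\<bar> \<le> 1 \<Longrightarrow> \<bar>f (p + h)\<bar> \<le> B"
    and "\<forall>i. \<bar>h$i\<bar> \<le> 1"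
  shows "\<bar>f (p + h) - f p\<bar> \<le> 2 * B * (\<Sum>i\<in>UNIV. \<bar>h$i\<bar>)"
proof -
  have "\<bar>f (p + h) - f p\<bar> \<le> 2 * B * (\<Sum>i\<in>I. \<bar>h$i\<bar>)" if "\<forall>i\<in>-I. h$i = 0" "\<forall>i. \<bar>h$i\<bar> \<le> 1" for I h
    using finite[of I] that
  proof (induction I arbitrary: h rule: finite_induct)
    case empty
    have "h = 0"
      using empty.prems(1) by (simp add: vec_eq_iff)
    then show ?case by simp
  next
    case (insert i I)
    define h0 where "h0 = h - h$i *\<^sub>R axis i 1"
    have coord: "(h0 + c *\<^sub>R axis i 1)$j = (if j = i then c else h$j)" for c j
      by (simp add: h0_def axis_def)
    have "\<bar>f (p + h0 + h$i *\<^sub>R axis i 1) - f (p + h0)\<bar> \<le> 2 * B * \<bar>h$i\<bar>"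
    proof (rule convex_bounded_increment_le[of "\<lambda>s. f (p + h0 + s *\<^sub>R axis i 1)", simplified])
      show "convex_on UNIV (\<lambda>s. f (p + h0 + s *\<^sub>R axis i 1))"
        using assms(1) by (simp add: convex_along_def)
      show "\<bar>f (p + h0 + s *\<^sub>R axis i 1)\<bar> \<le> B" if "\<bar>s\<bar> \<le> 1" for s
      proof -
        have "\<forall>j. \<bar>(h0 + s *\<^sub>R axis i 1)$j\<bar> \<le> 1"
          unfolding coord using that insert.prems(2) by simp
        from assms(2)[OF this] show ?thesis
          by (simp add: add.assoc)
      qed
      show "\<bar>h$i\<bar> \<le> 1"
        using insert.prems(2) by blast
    qed
    moreover have "\<bar>f (p + h0) - f p\<bar> \<le> 2 * B * (\<Sum>j\<in>I. \<bar>h$j\<bar>)"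
    proof -
      have h0_coord: "h0$j = (if j = i then 0 else h$j)" for j
        using coord[of 0 j] by simp
      have "(\<Sum>j\<in>I. \<bar>h0$j\<bar>) = (\<Sum>j\<in>I. \<bar>h$j\<bar>)"
        using insert.hyps(2) by (intro sum.cong) (auto simp: h0_coord)
      moreover have "\<forall>j\<in>-I. h0$j = 0" "\<forall>j. \<bar>h0$j\<bar> \<le> 1"
        using insert.prems by (auto simp: h0_coord)
      ultimately show ?thesis
        using insert.IH[of h0] by simp
    qed
    moreover have "f (p + h) = f (p + h0 + h$i *\<^sub>R axis i 1)"
      by (simp add: h0_def)
    ultimately show ?case
      unfolding sum.insert[OF insert.hyps] abs_le_iff distrib_left by linarith
  qed
  from this[of UNIV] show ?thesis
    using assms(3) by simp
qed

lemma axis_convex_continuous: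
  fixes f :: "real^'n \<Rightarrow> real"
  assumes "\<And>i. convex_along f (axis i 1)"
    and "\<And>p. \<exists>B. \<forall>h. (\<forall>i. \<bar>h$i\<bar> \<le> 1) \<longrightarrow> \<bar>f (p + h)\<bar> \<le> B"
  shows "continuous_on UNIV f"
proof -
  have "isCont f p" for p
  proof -
    obtain B where B: "\<And>h. \<forall>i. \<bar>h$i\<bar> \<le> 1 \<Longrightarrow> \<bar>f (p + h)\<bar> \<le> B"
      using assms(2) by blast
    have "\<forall>\<^sub>F q in at p. norm (f q - f p) \<le> 2 * B * (\<Sum>i\<in>UNIV. \<bar>(q - p)$i\<bar>)"
      unfolding eventually_at
    proof (intro exI[of _ 1] conjI ballI impI)
      fix q assume "q \<noteq> p \<and> dist q p < 1"
      then have "\<forall>i. \<bar>(q - p)$i\<bar> \<le> 1"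
        by (intro allI order_trans[OF component_le_norm_cart]) (simp add: dist_norm)
      from axis_convex_increment_bound[OF assms(1) B this]
      show "norm (f q - f p) \<le> 2 * B * (\<Sum>i\<in>UNIV. \<bar>(q - p)$i\<bar>)"
        by simp
    qed simp
    moreover have "((\<lambda>q. 2 * B * (\<Sum>i\<in>UNIV. \<bar>(q - p)$i\<bar>)) \<longlongrightarrow> 0) (at p)"
    proof -
      have "((\<lambda>q. 2 * B * (\<Sum>i\<in>UNIV. \<bar>(q - p)$i\<bar>)) \<longlongrightarrow> 2 * B * (\<Sum>i\<in>UNIV. \<bar>(p - p)$i\<bar>)) (at p)"
        by (intro tendsto_intros)
      then show ?thesis by simp
    qed
    ultimately have "((\<lambda>q. f q - f p) \<longlongrightarrow> 0) (at p)"
      by (rule Lim_null_comparison)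
    then show ?thesis
      unfolding isCont_def by (rule LIM_zero_cancel)
  qed
  then show ?thesis
    by (simp add: continuous_at_imp_continuous_on)
qed

lemma convex21_convex_along:
  assumes "convex21 f" and "d$3 = 0 \<or> (d$1 = 0 \<and> d$2 = 0)"
  shows "convex_along f d"
proof (cases "d$3 = 0")
  case True
  then show ?thesis
    using assms(1) by (cases "d = 0") (auto simp: convex21_def convex_along_def convex_on_const)
next
  case False
  then have "d = d$3 *\<^sub>R e3"
    using assms(2) by (simp add: vec_eq_iff forall_3 e3_def axis_def)
  moreover have "convex_along f e3"
    using assms(1) by (simp add: convex21_def convex_along_def)
  ultimately show ?thesis
    by (metis convex_along_scaleR)
qed

lemma convex21_convex_along_axis:
  assumes "convex21 f"
  shows "convex_along f (axis i 1)"
  using exhaust_3[of i] by (auto simp: axis_def intro: convex21_convex_along[OF assms])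

lemma convex21_bounded_on_cube:
  assumes "convex21 f"
  shows "\<exists>B. \<forall>h. (\<forall>i. \<bar>h$i\<bar> \<le> R) \<longrightarrow> \<bar>f (p + h)\<bar> \<le> B"
proof -
  obtain B where B: "\<And>h. \<forall>i. \<bar>h$i\<bar> \<le> R \<Longrightarrow> f (p + h) \<le> B"
    using axis_convex_bounded_above_on_cube[OF convex21_convex_along_axis[OF assms]] by blast
  \<comment> \<open>The axis directions only bound f from above; the lower bound also uses convexity
    along the horizontal direction g.\<close>
  have lower: "4 * f p - 3 * B \<le> f (p + h)" if h: "\<forall>i. \<bar>h$i\<bar> \<le> R" for h
  proof -
    define v where "v = h$3 *\<^sub>R e3"
    define g where "g = h - v"
    have v_coords: "v$1 = 0" "v$2 = 0" "v$3 = h$3"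
      by (simp_all add: v_def e3_def axis_def)
    have g_coords: "g$1 = h$1" "g$2 = h$2" "g$3 = 0"
      by (simp_all add: g_def v_coords)
    have "2 * f (p + g) \<le> f (p + g - v) + f (p + g + v)"
      using assms by (intro convex_along_midpoint convex21_convex_along) (simp_all add: v_coords)
    moreover have "p + g - v = p + (h - 2 *\<^sub>R v)" "p + g + v = p + h"
      by (simp_all add: g_def scaleR_2 algebra_simps)
    moreover have "f (p + (h - 2 *\<^sub>R v)) \<le> B"
      using h by (intro B) (simp add: forall_3 v_coords)
    moreover have "2 * f p \<le> f (p - g) + f (p + g)"
      using assms by (intro convex_along_midpoint convex21_convex_along) (simp_all add: g_coords)
    moreover have "f (p + - g) \<le> B"
      using h by (intro B) (auto simp: forall_3 g_coords abs_le_iff)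
    ultimately show ?thesis by simp
  qed
  have "\<bar>f (p + h)\<bar> \<le> max B (3 * B - 4 * f p)" if "\<forall>i. \<bar>h$i\<bar> \<le> R" for h
    using B[OF that] lower[OF that] by (auto simp: abs_le_iff le_max_iff_disj)
  then show ?thesis by blast
qed

lemma convex21_continuous:
  assumes "convex21 f"
  shows "continuous_on UNIV f"
  using assms
  by (intro axis_convex_continuous convex21_convex_along_axis convex21_bounded_on_cube)

lemma lowdim_el_bounded:
  assumes "lowdim_el L E"
  shows "bounded E"
  using assms unfolding lowdim_el_def
proof (elim disjE)
  assume "point_el E"
  then show ?thesis by (auto simp: point_el_def)
next
  assume "hseg_el L E"
  then show ?thesis by (auto simp: hseg_el_def bounded_open_segment)
next
  assume "vseg_el L E"
  then show ?thesis by (auto simp: vseg_el_def bounded_open_segment)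
next
  assume "htri_el L E"
  then obtain a b c where E: "E = rel_interior (convex hull {a, b, c})"
    by (auto simp: htri_el_def)
  have "bounded (convex hull {a, b, c})"
    by (intro compact_imp_bounded compact_convex_hull finite_imp_compact) simp
  then show ?thesis
    unfolding E using rel_interior_subset bounded_subset by blast
next
  assume "vrect_el L E"
  then obtain p q h where
    E: "E = {p + s *\<^sub>R (q - p) + t *\<^sub>R (h *\<^sub>R e3) | s t. 0 < s \<and> s < 1 \<and> 0 < t \<and> t < 1}"
    by (auto simp: vrect_el_def)
  define \<gamma> where "\<gamma> z = p + fst z *\<^sub>R (q - p) + snd z *\<^sub>R (h *\<^sub>R e3)" for z :: "real \<times> real"
  have "E \<subseteq> \<gamma> ` ({0..1} \<times> {0..1})"
    unfolding E \<gamma>_def by force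
  moreover have "compact (\<gamma> ` ({0..1} \<times> {0..1}))"
    unfolding \<gamma>_def by (intro compact_continuous_image compact_Times compact_Icc continuous_intros)
  ultimately show ?thesis
    using bounded_subset compact_imp_bounded by blast
qed

lemma complex21_compact:
  assumes "complex21 C"
  shows "compact C"
proof -
  obtain L where L: "finite L" "\<forall>E\<in>L. lowdim_el L E \<or> open_el L E" "C = \<Union>L" "closed C"
    using assms by (auto simp: complex21_def)
  have "bounded E" if "E \<in> L" for E
    using L(2) that lowdim_el_bounded by (auto simp: open_el_def)
  then have "bounded C"
    using L by (auto intro: bounded_Union)
  then show ?thesis
    using L(4) by (simp add: compact_eq_bounded_closed)
qed

lemma open_segment_symmetric_points:
  fixes a b p :: "'a::real_vector"
  assumes "p \<in> open_segment a b"
  obtains c where "c > 0" "p - c *\<^sub>R (b - a) \<in> open_segment a b" "p + c *\<^sub>R (b - a) \<in> open_segment a b"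
proof -
  obtain u where u: "a \<noteq> b" "0 < u" "u < 1" "p = (1 - u) *\<^sub>R a + u *\<^sub>R b"
    using assms unfolding in_segment by blast
  define c where "c = min u (1 - u) / 2"
  have shift: "p + s *\<^sub>R (b - a) \<in> open_segment a b" if "\<bar>s\<bar> \<le> c" for s
  proof -
    have "p + s *\<^sub>R (b - a) = (1 - (u + s)) *\<^sub>R a + (u + s) *\<^sub>R b"
      by (simp add: u(4) algebra_simps)
    moreover have "0 < u + s" "u + s < 1"
      using that u(2,3) by (auto simp: c_def abs_le_iff)
    ultimately show ?thesis
      unfolding in_segment using u(1) by blast
  qed
  have "c > 0"
    using u(2,3) by (simp add: c_def)
  then show thesis
    using that[of c] shift[of c] shift[of "-c"] by simp
qed

lemma convex21_attains_max_at_Extr: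
  assumes "compact C" "C \<noteq> {}" "convex21 f"
  obtains p where "p \<in> Extr C" "\<And>x. x \<in> C \<Longrightarrow> f x \<le> f p"
proof -
  have cont: "continuous_on UNIV f"
    using assms(3) by (rule convex21_continuous)
  obtain x0 where x0: "x0 \<in> C" "\<forall>x\<in>C. f x \<le> f x0"
    using continuous_attains_sup[OF assms(1,2) continuous_on_subset[OF cont]] by blast
  define A where "A = C \<inter> {x. f x = f x0}"
  have "compact A"
    unfolding A_def using assms(1) cont by (intro compact_Int_closed closed_Collect_eq continuous_intros)
  moreover have "A \<noteq> {}"
    using x0 by (auto simp: A_def)
  moreover have "continuous_on A (\<lambda>y. y \<bullet> y)"
    by (intro continuous_intros)
  ultimately obtain p where p: "p \<in> A" "\<forall>y\<in>A. y \<bullet> y \<le> p \<bullet> p"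
    using continuous_attains_sup by blast
  have False if ab: "hor_pair a b \<or> vert_pair a b" "open_segment a b \<subseteq> C" "p \<in> open_segment a b" for a b
  proof -
    obtain c where c: "c > 0" "p - c *\<^sub>R (b - a) \<in> open_segment a b" "p + c *\<^sub>R (b - a) \<in> open_segment a b"
      using open_segment_symmetric_points[OF ab(3)] by blast
    define v where "v = c *\<^sub>R (b - a)"
    have "convex_along f v"
      unfolding v_def using ab(1)
      by (intro convex_along_scaleR convex21_convex_along[OF assms(3)]) (auto simp: hor_pair_def vert_pair_def)
    then have "2 * f p \<le> f (p - v) + f (p + v)"
      by (rule convex_along_midpoint)
    moreover have in_C: "p - v \<in> C" "p + v \<in> C"
      using c ab(2) by (auto simp: v_def)
    moreover have "f p = f x0"
      using p(1) by (simp add: A_def)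
    ultimately have "f (p - v) = f x0 \<and> f (p + v) = f x0"
      using x0(2)[rule_format, OF in_C(1)] x0(2)[rule_format, OF in_C(2)]
      by (intro conjI antisym) linarith+
    then have "p - v \<in> A" "p + v \<in> A"
      using in_C by (auto simp: A_def)
    then have "(p - v) \<bullet> (p - v) \<le> p \<bullet> p" "(p + v) \<bullet> (p + v) \<le> p \<bullet> p"
      using p(2) by blast+
    moreover have "(p - v) \<bullet> (p - v) + (p + v) \<bullet> (p + v) = 2 * (p \<bullet> p) + 2 * (v \<bullet> v)"
      by (simp add: inner_diff inner_add inner_commute)
    ultimately have "v \<bullet> v \<le> 0"
      by simp
    then have "v = 0"
      by (metis inner_gt_zero_iff not_le)
    then show False
      using c(1) ab(1) by (auto simp: v_def hor_pair_def vert_pair_def)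
  qed
  then have "p \<in> Extr C"
    using p(1) by (auto simp: Extr_def A_def)
  then show thesis
    using that p(1) x0(2) by (auto simp: A_def)
qed

theorem lemma2p6:
  fixes K :: "(real^3) set"
  assumes "finite K"
  shows "Kcc K \<subseteq> Krc K"
proof
  fix x assume "x \<in> Kcc K"
  then obtain C where C: "complex21 C" "Extr C \<subseteq> K" "x \<in> C"
    unfolding Kcc_def by blast
  have "f x \<le> Sup (f ` K)" if cf: "convex21 f" for f
  proof -
    obtain p where p: "p \<in> Extr C" "\<And>y. y \<in> C \<Longrightarrow> f y \<le> f p"
      using convex21_attains_max_at_Extr[OF complex21_compact[OF C(1)] _ cf] C(3) by blast
    have "f x \<le> f p"
      using p(2) C(3) .
    also have "f p \<le> Sup (f ` K)"
      using p(1) C(2) assms by (intro cSup_upper) auto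
    finally show ?thesis .
  qed
  then show "x \<in> Krc K"
    unfolding Krc_def by blast
qed

end
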